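(* Let $\tilde{\mathbb{I}}=\{\langle \mu,\nu\rangle\in[0,1]^2 \mid \mu+\nu\le 1\}$, equipped with the subspace topology inherited from $\mathbb{R}^2$. There is no continuous function $f:\tilde{\mathbb{I}}\to\mathbb{R}$ satisfying both of the following conditions: (1) $f$ is injective, i.e., for all $\alpha,\beta\in\tilde{\mathbb{I}}$ with $\alpha\neq\beta$, $f(\alpha)\neq f(\beta)$; (2) $f$ is increasing with respect to Atanassov's partial order $\subset$, i.e., for all $\alpha,\beta\in\tilde{\mathbb{I}}$ with $\alpha\subset\beta$, $f(\alpha)\le f(\beta)$.
   Context: Elements $\alpha=\langle\mu_\alpha,\nu_\alpha\rangle\in\tilde{\mathbb{I}}$ are called intuitionistic fuzzy values (IFVs). Atanassov's partial order on $\tilde{\mathbb{I}}$ is defined by $\langle\mu_1,\nu_1\rangle\subset\langle\mu_2,\nu_2\rangle$ if and only if $\mu_1\le\mu_2$ and $\nu_1\ge\nu_2$. *)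

theory Defs
  imports "HOL-Analysis.Analysis"
begin

definition IFV_set :: "(real \<times> real) set" where
  "IFV_set = {(\<mu>, \<nu>). 0 \<le> \<mu> \<and> \<mu> \<le> 1 \<and> 0 \<le> \<nu> \<and> \<nu> \<le> 1 \<and> \<mu> + \<nu> \<le> 1}"

definition atanassov_le :: "real \<times> real \<Rightarrow> real \<times> real \<Rightarrow> bool" where
  "atanassov_le a b \<longleftrightarrow> fst a \<le> fst b \<and> snd a \<ge> snd b"

end

theory Submission
  imports Defs
begin

(* The values A = <0,0> and B = <1/2,1/2> are incomparable, and both lie below
   C = <1/2,0>, each joined to C by a segment inside the triangle.  If f(A) <= f(B) <= f(C),
   the intermediate value theorem on the segment from A to C yields a point of it where f takes
   the value f(B), which by injectivity must be B itself; but B is not on that segment.  The case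
   f(B) <= f(A) is symmetric. *)

lemma convex_IFV_set: "convex IFV_set"
proof (rule convexI)
  fix x y :: "real \<times> real" and u v :: real
  assume "x \<in> IFV_set" "y \<in> IFV_set" "0 \<le> u" "0 \<le> v" "u + v = 1"
  then show "u *\<^sub>R x + v *\<^sub>R y \<in> IFV_set"
    using mult_left_mono[of "fst x + snd x" 1 u] mult_left_mono[of "fst y + snd y" 1 v]
    by (auto simp: IFV_set_def algebra_simps) (smt (verit) mult_nonneg_nonneg)+
qed

lemma IVT_closed_segment:
  fixes f :: "'a::real_normed_vector \<Rightarrow> real"
  assumes "continuous_on (closed_segment a b) f" and "f a \<le> y" "y \<le> f b"
  shows "\<exists>p\<in>closed_segment a b. f p = y"
proof -
  have "connected (f ` closed_segment a b)"
    using assms(1) connected_continuous_image connected_segment by blast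
  then have "y \<in> f ` closed_segment a b"
    using connectedD_interval[of "f ` closed_segment a b" "f a" "f b" y] assms(2,3) by auto
  then show ?thesis by blast
qed

lemma continuous_inj_on_segments_to_upper_bound:
  fixes f :: "'a::real_normed_vector \<Rightarrow> real"
  assumes cont: "continuous_on S f" and inj: "inj_on f S"
    and seg_a: "closed_segment a c \<subseteq> S" and seg_b: "closed_segment b c \<subseteq> S"
    and "f a \<le> f c" "f b \<le> f c"
  shows "a \<in> closed_segment b c \<or> b \<in> closed_segment a c"
proof -
  have hit: "x \<in> closed_segment z c"
    if between: "f z \<le> f x" "f x \<le> f c" and seg: "closed_segment z c \<subseteq> S" and "x \<in> S"
    for x z
  proof -
    obtain p where p: "p \<in> closed_segment z c" "f p = f x"
      using IVT_closed_segment[OF continuous_on_subset[OF cont seg] between] by blast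
    then have "p = x"
      using inj seg \<open>x \<in> S\<close> by (auto dest: inj_onD)
    with p show ?thesis by simp
  qed
  have "a \<in> S" "b \<in> S"
    using seg_a seg_b by auto
  then show ?thesis
    using hit[of a b] hit[of b a] seg_a seg_b assms(5,6) by linarith
qed

theorem theorem3:
  "\<not> (\<exists>f :: real \<times> real \<Rightarrow> real.
        continuous_on IFV_set f \<and>
        inj_on f IFV_set \<and>
        (\<forall>a\<in>IFV_set. \<forall>b\<in>IFV_set. atanassov_le a b \<longrightarrow> f a \<le> f b))"
proof
  assume "\<exists>f :: real \<times> real \<Rightarrow> real.
        continuous_on IFV_set f \<and>
        inj_on f IFV_set \<and>
        (\<forall>a\<in>IFV_set. \<forall>b\<in>IFV_set. atanassov_le a b \<longrightarrow> f a \<le> f b)"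
  then obtain f :: "real \<times> real \<Rightarrow> real" where cont: "continuous_on IFV_set f"
    and inj: "inj_on f IFV_set"
    and mono: "\<forall>a\<in>IFV_set. \<forall>b\<in>IFV_set. atanassov_le a b \<longrightarrow> f a \<le> f b" by blast
  define A B C :: "real \<times> real" where "A = (0, 0)" and "B = (1/2, 1/2)" and "C = (1/2, 0)"
  have in_IFV: "A \<in> IFV_set" "B \<in> IFV_set" "C \<in> IFV_set"
    by (auto simp: A_def B_def C_def IFV_set_def)
  have "f A \<le> f C" "f B \<le> f C"
    using mono in_IFV by (auto simp: atanassov_le_def A_def B_def C_def)
  moreover have "closed_segment A C \<subseteq> IFV_set" "closed_segment B C \<subseteq> IFV_set"
    using convex_IFV_set in_IFV by (simp_all add: closed_segment_subset)
  ultimately have "A \<in> closed_segment B C \<or> B \<in> closed_segment A C"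
    using continuous_inj_on_segments_to_upper_bound[OF cont inj] by blast
  then show False
    by (auto simp: A_def B_def C_def in_segment)
qed

end
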